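(* Let $m\geq1$ and let $S=\bigsqcup_{\mathcal{O}}\mathcal{O}^{a(\mathcal{O})}$ be a finite $F_m^0$-set, where $\mathcal{O}$ runs over isomorphism classes of strongly finite transitive $F_m^0$-sets and the multiplicities $a(\mathcal{O})\in\mathbb{N}$ are almost all zero. Then the $F_m^0$-action on $S$ extends to an $F_m$-action if and only if $a(\mathcal{O})=a(z_1(\mathcal{O}))$ for every strongly finite transitive $F_m^0$-set $\mathcal{O}$.
   Context: $F_m$ is the free group on $z_1,\dots,z_m$, $\upsilon:F_m\to\mathbb{Z}$ the homomorphism with $\upsilon(z_i)=1$ for all $i$, and $F_m^0=\ker\upsilon$. For an $F_m^0$-set $S$ and $t\in\mathbb{Z}$, $z_1^t(S)$ denotes the set $S$ with the $F_m^0$-action $g\cdot s=z_1^{-t}gz_1^ts$. A finite transitive $F_m^0$-set $\mathcal{O}$ is strongly finite if $z_1^k(\mathcal{O})\cong\mathcal{O}$ for some integer $k>0$; then $z_1(\mathcal{O})$ is again strongly finite transitive. *)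

theory Defs
  imports "HOL-Algebra.Group_Action"
begin

text \<open>A letter (i,b) stands for z_i if b = False and for z_i^{-1} if b = True.\<close>
type_synonym fword = "(nat \<times> bool) list"

fun reduced :: "fword \<Rightarrow> bool" where
  "reduced ((i,b) # (j,c) # w) = (\<not> (i = j \<and> b \<noteq> c) \<and> reduced ((j,c) # w))"
| "reduced _ = True"

fun cons_red :: "nat \<times> bool \<Rightarrow> fword \<Rightarrow> fword" where
  "cons_red (i,b) ((j,c) # w) = (if i = j \<and> b \<noteq> c then w else (i,b) # (j,c) # w)"
| "cons_red x [] = [x]"

definition reduce :: "fword \<Rightarrow> fword" where
  "reduce w = foldr cons_red w []"

definition FG :: "nat \<Rightarrow> fword monoid" where
  "FG m = \<lparr> carrier = {w. reduced w \<and> (\<forall>(i,b) \<in> set w. 1 \<le> i \<and> i \<le> m)},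
            mult = (\<lambda>u v. reduce (u @ v)), one = [] \<rparr>"

definition upsilon :: "fword \<Rightarrow> int" where
  "upsilon w = sum_list (map (\<lambda>(i,b). if b then -1 else 1) w)"

definition F0 :: "nat \<Rightarrow> fword monoid" where
  "F0 m = (FG m) \<lparr> carrier := {w \<in> carrier (FG m). upsilon w = 0} \<rparr>"

definition z1 :: fword where "z1 = [(1, False)]"

text \<open>z_1^t(S): same set, action g . s = (z_1^{-t} g z_1^t) s.\<close>
definition zshift :: "nat \<Rightarrow> int \<Rightarrow> (fword \<Rightarrow> 'b \<Rightarrow> 'b) \<Rightarrow> (fword \<Rightarrow> 'b \<Rightarrow> 'b)" where
  "zshift m t \<phi> = (\<lambda>g. \<phi> (inv\<^bsub>FG m\<^esub> (z1 [^]\<^bsub>FG m\<^esub> t) \<otimes>\<^bsub>FG m\<^esub> g \<otimes>\<^bsub>FG m\<^esub> (z1 [^]\<^bsub>FG m\<^esub> t)))"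

definition gset_iso :: "('g, 'x) monoid_scheme \<Rightarrow> 'b set \<Rightarrow> ('g \<Rightarrow> 'b \<Rightarrow> 'b)
    \<Rightarrow> 'c set \<Rightarrow> ('g \<Rightarrow> 'c \<Rightarrow> 'c) \<Rightarrow> bool" where
  "gset_iso G X \<phi> Y \<psi> \<longleftrightarrow> (\<exists>f. bij_betw f X Y \<and>
      (\<forall>g \<in> carrier G. \<forall>x \<in> X. f (\<phi> g x) = \<psi> g (f x)))"

text \<open>Strongly finite transitive F_m^0-set (transitive sets are nonempty).\<close>
definition strongly_finite_transitive :: "nat \<Rightarrow> 'b set \<Rightarrow> (fword \<Rightarrow> 'b \<Rightarrow> 'b) \<Rightarrow> bool" where
  "strongly_finite_transitive m Orb \<phi> \<longleftrightarrow>
     transitive_action (F0 m) Orb \<phi> \<and> Orb \<noteq> {} \<and> finite Orb \<and>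
     (\<exists>k::int. k > 0 \<and> gset_iso (F0 m) Orb (zshift m k \<phi>) Orb \<phi>)"

definition restr_act :: "(fword \<Rightarrow> 'b \<Rightarrow> 'b) \<Rightarrow> 'b set \<Rightarrow> (fword \<Rightarrow> 'b \<Rightarrow> 'b)" where
  "restr_act \<phi> X = (\<lambda>g. restrict (\<phi> g) X)"

definition multiplicity_in :: "nat \<Rightarrow> 'a set \<Rightarrow> (fword \<Rightarrow> 'a \<Rightarrow> 'a) \<Rightarrow> 'b set \<Rightarrow> (fword \<Rightarrow> 'b \<Rightarrow> 'b) \<Rightarrow> nat" where
  "multiplicity_in m S \<phi> Orb \<psi> =
     card {X \<in> orbits (F0 m) S \<phi>. gset_iso (F0 m) X (restr_act \<phi> X) Orb \<psi>}"

end

theory Submission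
  imports Defs "HOL-Algebra.Elementary_Groups" "HOL-Library.Disjoint_Sets"
begin

(* Write z for z_1 and K = F_m^0 = ker upsilon.  If psi extends the action of K on S to F_m,
   then T = psi(z) is an isomorphism of K-sets from z_1(S) to S.  Conversely, F_m is the
   semidirect product of K and the infinite cyclic group generated by z, so such an
   isomorphism T extends the action by k z^n |-> phi(k) T^n.  Hence the action extends iff
   z_1(S) and S are isomorphic K-sets.  Finite K-sets are classified by the multiplicities
   of their orbits, and the orbits of z_1(S) are the z_1(X) for the orbits X of S; so
   z_1(S) and S are isomorphic iff a(O) = a(z_1(O)) for every O. *)

section \<open>Reduced words and the free group\<close>

definition inv_letter :: "nat \<times> bool \<Rightarrow> nat \<times> bool" where
  "inv_letter x = (fst x, \<not> snd x)"

lemma inv_letter_inv_letter [simp]: "inv_letter (inv_letter x) = x"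
  by (simp add: inv_letter_def)

lemma cons_red_eq:
  "cons_red x w = (case w of [] \<Rightarrow> [x] | y # w' \<Rightarrow> if y = inv_letter x then w' else x # w)"
  by (cases x; cases w) (auto simp: inv_letter_def split: if_splits)

lemma reduced_Cons_Cons: "reduced (x # y # w) \<longleftrightarrow> y \<noteq> inv_letter x \<and> reduced (y # w)"
  by (cases x; cases y) (auto simp: inv_letter_def)

lemma reduced_ConsD: "reduced (x # w) \<Longrightarrow> reduced w"
  by (cases w) (auto simp: reduced_Cons_Cons)

lemma reduced_cons_red: "reduced w \<Longrightarrow> reduced (cons_red x w)"
  by (cases w) (auto simp: cons_red_eq reduced_Cons_Cons dest: reduced_ConsD)

lemma cons_red_cancel: "reduced w \<Longrightarrow> cons_red x (cons_red (inv_letter x) w) = w"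
proof (induction w rule: remdups_adj.induct)
  case (3 y y' w)
  then show ?case by (auto simp: cons_red_eq reduced_Cons_Cons)
qed (auto simp: cons_red_eq)

lemma cons_red_cancel': "reduced w \<Longrightarrow> cons_red (inv_letter x) (cons_red x w) = w"
  using cons_red_cancel[of w "inv_letter x"] by simp

lemma reduced_foldr_cons_red: "reduced z \<Longrightarrow> reduced (foldr cons_red u z)"
  by (induction u) (auto intro: reduced_cons_red)

lemma foldr_cons_red_cons_red:
  "reduced z \<Longrightarrow> foldr cons_red (cons_red x w) z = cons_red x (foldr cons_red w z)"
proof (cases w)
  case (Cons y w')
  assume z: "reduced z"
  show ?thesis
  proof (cases "y = inv_letter x")
    case True
    then show ?thesis
      using Cons cons_red_cancel[OF reduced_foldr_cons_red[OF z], of x w'] by (simp add: cons_red_eq)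
  qed (simp add: Cons cons_red_eq)
qed (simp add: cons_red_eq)

(* Words act on reduced words by cancelling prepends.  The action of a word only depends on
   its reduced form, which gives associativity of the free group. *)
lemma foldr_cons_red_reduce:
  "reduced z \<Longrightarrow> foldr cons_red (reduce u) z = foldr cons_red u z"
  by (induction u) (simp_all add: reduce_def foldr_cons_red_cons_red)

lemma reduced_reduce: "reduced (reduce w)"
  unfolding reduce_def by (rule reduced_foldr_cons_red) simp

lemma reduce_reduced: "reduced w \<Longrightarrow> reduce w = w"
proof (induction w)
  case (Cons x w)
  then have "reduce w = w" using reduced_ConsD by blast
  with Cons.prems show ?case
    by (cases w) (auto simp: reduce_def cons_red_eq reduced_Cons_Cons)
qed (simp add: reduce_def)

lemma reduce_append: "reduce (u @ v) = foldr cons_red u (reduce v)"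
  by (simp add: reduce_def)

lemma reduce_reduce_append: "reduce (reduce (u @ v) @ w) = reduce (u @ reduce (v @ w))"
proof -
  have "reduce (reduce (u @ v) @ w) = foldr cons_red (reduce (u @ v)) (reduce w)"
    by (rule reduce_append)
  also have "\<dots> = foldr cons_red (u @ v) (reduce w)"
    by (rule foldr_cons_red_reduce[OF reduced_reduce])
  also have "\<dots> = foldr cons_red u (reduce (reduce (v @ w)))"
    by (simp add: reduce_append reduce_reduced reduced_reduce reduced_foldr_cons_red)
  finally show ?thesis by (simp add: reduce_append)
qed

lemma reduce_inverse_append: "reduce (rev (map inv_letter w) @ w) = []"
proof -
  have "foldr cons_red (rev (map inv_letter w)) (foldr cons_red w z) = z" if "reduced z" for z
    using that by (induction w) (simp_all add: cons_red_cancel' reduced_foldr_cons_red)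
  then show ?thesis by (simp add: reduce_def)
qed

lemma set_reduce: "set (reduce w) \<subseteq> set w"
proof -
  have "set (foldr cons_red u z) \<subseteq> set u \<union> set z" for u z
    by (induction u) (auto simp: cons_red_eq split: list.splits if_splits)
  then show ?thesis by (force simp: reduce_def)
qed

lemma carrier_FG: "carrier (FG m) = {w. reduced w \<and> (\<forall>(i,b) \<in> set w. 1 \<le> i \<and> i \<le> m)}"
  and mult_FG: "u \<otimes>\<^bsub>FG m\<^esub> v = reduce (u @ v)"
  and one_FG: "\<one>\<^bsub>FG m\<^esub> = []"
  by (simp_all add: FG_def)

lemma group_FG: "group (FG m)"
proof (rule groupI)
  fix x y assume "x \<in> carrier (FG m)" "y \<in> carrier (FG m)"
  then show "x \<otimes>\<^bsub>FG m\<^esub> y \<in> carrier (FG m)"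
    using set_reduce[of "x @ y"] by (fastforce simp: carrier_FG mult_FG reduced_reduce)
next
  fix x assume x: "x \<in> carrier (FG m)"
  let ?y = "reduce (rev (map inv_letter x))"
  have "?y \<in> carrier (FG m)"
    using x set_reduce[of "rev (map inv_letter x)"]
    by (fastforce simp: carrier_FG reduced_reduce inv_letter_def)
  moreover have "?y \<otimes>\<^bsub>FG m\<^esub> x = \<one>\<^bsub>FG m\<^esub>"
    using reduce_inverse_append[of x]
    by (simp add: mult_FG one_FG reduce_append foldr_cons_red_reduce reduced_reduce)
  ultimately show "\<exists>y\<in>carrier (FG m). y \<otimes>\<^bsub>FG m\<^esub> x = \<one>\<^bsub>FG m\<^esub>" ..
qed (simp_all add: carrier_FG mult_FG one_FG reduce_reduced reduce_reduce_append)

lemma upsilon_Nil [simp]: "upsilon [] = 0"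
  by (simp add: upsilon_def)

lemma upsilon_Cons [simp]: "upsilon (x # w) = (if snd x then -1 else 1) + upsilon w"
  by (cases x) (simp add: upsilon_def)

lemma upsilon_append [simp]: "upsilon (u @ v) = upsilon u + upsilon v"
  by (simp add: upsilon_def)

lemma upsilon_reduce: "upsilon (reduce w) = upsilon w"
proof -
  have "upsilon (cons_red x w) = upsilon (x # w)" for x w
    by (auto simp: cons_red_eq inv_letter_def split: list.splits)
  then have "upsilon (foldr cons_red u z) = upsilon (u @ z)" for u z
    by (induction u) simp_all
  then show ?thesis by (simp add: reduce_def)
qed

lemma group_hom_upsilon: "group_hom (FG m) integer_group upsilon"
  by (rule group_hom.intro[OF group_FG group_integer_group], unfold_locales)
     (simp add: hom_def mult_FG upsilon_reduce)

lemma F0_eq_kernel: "F0 m = FG m\<lparr>carrier := kernel (FG m) integer_group upsilon\<rparr>"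
  by (simp add: F0_def kernel_def)

lemma z1_in_carrier: "1 \<le> m \<Longrightarrow> z1 \<in> carrier (FG m)"
  by (simp add: z1_def carrier_FG)

lemma upsilon_z1: "upsilon z1 = 1"
  by (simp add: z1_def upsilon_def)

section \<open>Isomorphisms and orbit multiplicities of G-sets\<close>

lemma gset_iso_refl: "gset_iso G X \<alpha> X \<alpha>"
  unfolding gset_iso_def by (rule exI[of _ id]) simp

lemma gset_iso_trans:
  assumes "gset_iso G X \<alpha> Y \<beta>" and "gset_iso G Y \<beta> Z \<gamma>"
  shows "gset_iso G X \<alpha> Z \<gamma>"
proof -
  obtain f where f: "bij_betw f X Y" "\<forall>g\<in>carrier G. \<forall>x\<in>X. f (\<alpha> g x) = \<beta> g (f x)"
    using assms(1) unfolding gset_iso_def by blast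
  obtain h where h: "bij_betw h Y Z" "\<forall>g\<in>carrier G. \<forall>y\<in>Y. h (\<beta> g y) = \<gamma> g (h y)"
    using assms(2) unfolding gset_iso_def by blast
  have "\<forall>g\<in>carrier G. \<forall>x\<in>X. (h \<circ> f) (\<alpha> g x) = \<gamma> g ((h \<circ> f) x)"
    using f h by (simp add: bij_betwE)
  with bij_betw_trans[OF f(1) h(1)] show ?thesis
    unfolding gset_iso_def by blast
qed

lemma gset_iso_sym:
  assumes iso: "gset_iso G X \<alpha> Y \<beta>"
    and closed: "\<And>g x. g \<in> carrier G \<Longrightarrow> x \<in> X \<Longrightarrow> \<alpha> g x \<in> X"
  shows "gset_iso G Y \<beta> X \<alpha>"
proof -
  obtain f where f: "bij_betw f X Y" and eqv: "\<forall>g\<in>carrier G. \<forall>x\<in>X. f (\<alpha> g x) = \<beta> g (f x)"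
    using iso unfolding gset_iso_def by blast
  have "inv_into X f (\<beta> g y) = \<alpha> g (inv_into X f y)" if g: "g \<in> carrier G" and y: "y \<in> Y" for g y
  proof -
    obtain x where x: "x \<in> X" "y = f x"
      using f y by (auto simp: bij_betw_def)
    then have "\<beta> g y = f (\<alpha> g x)"
      using eqv g by simp
    then show ?thesis
      using x closed[OF g] by (simp add: bij_betw_inv_into_left[OF f])
  qed
  with bij_betw_inv_into[OF f] show ?thesis
    unfolding gset_iso_def by blast
qed

lemma gset_iso_cong:
  assumes "\<And>g x. g \<in> carrier G \<Longrightarrow> x \<in> X \<Longrightarrow> \<alpha> g x = \<alpha>' g x"
    and "\<And>g y. g \<in> carrier G \<Longrightarrow> y \<in> Y \<Longrightarrow> \<beta> g y = \<beta>' g y"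
  shows "gset_iso G X \<alpha> Y \<beta> \<longleftrightarrow> gset_iso G X \<alpha>' Y \<beta>'"
  unfolding gset_iso_def using assms by (metis bij_betwE)

lemma gset_iso_restr_act:
  "gset_iso (F0 m) X (restr_act \<phi> X) Y \<beta> \<longleftrightarrow> gset_iso (F0 m) X \<phi> Y \<beta>"
  by (rule gset_iso_cong) (simp_all add: restr_act_def)

lemma group_actionI:
  assumes "group G"
    and bij: "\<And>g. g \<in> carrier G \<Longrightarrow> \<alpha> g \<in> Bij X"
    and comp: "\<And>g h x. g \<in> carrier G \<Longrightarrow> h \<in> carrier G \<Longrightarrow> x \<in> X \<Longrightarrow>
      \<alpha> (g \<otimes>\<^bsub>G\<^esub> h) x = \<alpha> g (\<alpha> h x)"
  shows "group_action G X \<alpha>"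
proof -
  have "\<alpha> (g \<otimes>\<^bsub>G\<^esub> h) = \<alpha> g \<otimes>\<^bsub>BijGroup X\<^esub> \<alpha> h" if g: "g \<in> carrier G" and h: "h \<in> carrier G" for g h
  proof (rule extensionalityI[where A = X])
    show "\<alpha> (g \<otimes>\<^bsub>G\<^esub> h) \<in> extensional X"
      using bij[OF monoid.m_closed[OF group.is_monoid[OF \<open>group G\<close>] g h]]
      by (rule Bij_imp_extensional)
    show "\<alpha> g \<otimes>\<^bsub>BijGroup X\<^esub> \<alpha> h \<in> extensional X"
      using bij[OF g] bij[OF h] by (simp add: BijGroup_def compose_extensional)
    show "\<alpha> (g \<otimes>\<^bsub>G\<^esub> h) x = (\<alpha> g \<otimes>\<^bsub>BijGroup X\<^esub> \<alpha> h) x" if "x \<in> X" for x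
      using bij[OF g] bij[OF h] comp[OF g h that] that by (simp add: BijGroup_def compose_def)
  qed
  moreover have "\<alpha> \<in> carrier G \<rightarrow> carrier (BijGroup X)"
    using bij by (simp add: BijGroup_def)
  ultimately show ?thesis
    unfolding group_action_def group_hom_def group_hom_axioms_def hom_def
    using \<open>group G\<close> group_BijGroup by blast
qed

lemma group_action_transfer:
  assumes act: "group_action G X \<alpha>" and e: "bij_betw e X Y"
  defines "\<beta> \<equiv> \<lambda>g. \<lambda>y\<in>Y. e (\<alpha> g (inv_into X e y))"
  shows "group_action G Y \<beta>" and "gset_iso G X \<alpha> Y \<beta>"
proof -
  have e_inv: "inv_into X e y \<in> X" if "y \<in> Y" for y
    using bij_betw_apply[OF bij_betw_inv_into[OF e] that] .
  have \<alpha>X: "\<alpha> g x \<in> X" if "g \<in> carrier G" "x \<in> X" for g x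
    using group_action.element_image[OF act that refl] .
  show "group_action G Y \<beta>"
  proof (rule group_actionI)
    show "group G"
      using act by (simp add: group_action_def group_hom_def)
    show "\<beta> g \<in> Bij Y" if g: "g \<in> carrier G" for g
    proof -
      have "bij_betw (\<alpha> g) X X"
        using group_action.bij_prop0[OF act g] by (simp add: Bij_def)
      then have "bij_betw (e \<circ> \<alpha> g \<circ> inv_into X e) Y Y"
        by (intro bij_betw_trans[OF _ e] bij_betw_trans[OF bij_betw_inv_into[OF e]])
      moreover have "bij_betw (\<beta> g) Y Y = bij_betw (e \<circ> \<alpha> g \<circ> inv_into X e) Y Y"
        by (rule bij_betw_cong) (simp add: \<beta>_def)
      ultimately show ?thesis
        by (simp add: Bij_def \<beta>_def)
    qed
    show "\<beta> (g \<otimes>\<^bsub>G\<^esub> h) y = \<beta> g (\<beta> h y)"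
      if "g \<in> carrier G" "h \<in> carrier G" "y \<in> Y" for g h y
      using that e_inv \<alpha>X bij_betw_apply[OF e] group_action.composition_rule[OF act]
      by (simp add: \<beta>_def bij_betw_inv_into_left[OF e])
  qed
  have "e (\<alpha> g x) = \<beta> g (e x)" if "g \<in> carrier G" "x \<in> X" for g x
    using that bij_betw_apply[OF e] by (simp add: \<beta>_def bij_betw_inv_into_left[OF e])
  with e show "gset_iso G X \<alpha> Y \<beta>"
    unfolding gset_iso_def by blast
qed

lemma exists_nat_gset_iso:
  assumes "group_action G X \<alpha>" and "finite X"
  obtains N :: "nat set" and \<beta> where "group_action G N \<beta>" and "gset_iso G X \<alpha> N \<beta>"
proof -
  obtain e where "bij_betw e X {0..<card X}"
    using ex_bij_betw_finite_nat[OF assms(2)] by blast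
  with group_action_transfer[OF assms(1)] that show ?thesis
    by blast
qed

lemma transitive_action_gset_iso:
  assumes trans: "transitive_action G X \<alpha>" and iso: "gset_iso G X \<alpha> Y \<beta>"
    and act: "group_action G Y \<beta>"
  shows "transitive_action G Y \<beta>"
proof -
  obtain f where f: "bij_betw f X Y" and eqv: "\<forall>g\<in>carrier G. \<forall>x\<in>X. f (\<alpha> g x) = \<beta> g (f x)"
    using iso unfolding gset_iso_def by blast
  have "\<exists>g\<in>carrier G. \<beta> g y = y'" if "y \<in> Y" "y' \<in> Y" for y y'
  proof -
    have "y \<in> f ` X" "y' \<in> f ` X"
      using that bij_betw_imp_surj_on[OF f] by simp_all
    then obtain x x' where x: "x \<in> X" "x' \<in> X" "y = f x" "y' = f x'"
      by blast
    obtain g where g: "g \<in> carrier G" "\<alpha> g x = x'"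
      using transitive_action.unique_orbit[OF trans x(1,2)] by blast
    then have "\<beta> g y = y'"
      using eqv x by auto
    with g show ?thesis by blast
  qed
  with act show ?thesis
    by (simp add: transitive_action_def transitive_action_axioms_def)
qed

lemma orbit_eq_image: "orbit G \<phi> x = (\<lambda>g. \<phi> g x) ` carrier G"
  unfolding orbit_def by blast

lemma orbits_eq_image: "orbits G E \<phi> = (\<lambda>s. orbit G \<phi> s) ` E"
  unfolding orbits_def by blast

lemma (in group_action) orbit_closed:
  assumes "X \<in> orbits G E \<phi>" and "g \<in> carrier G" and "x \<in> X"
  shows "\<phi> g x \<in> X"
proof -
  obtain s where s: "s \<in> E" "X = orbit G \<phi> s"
    using assms(1) unfolding orbits_def by blast
  have x: "x \<in> E"
    using assms(1,3) orbits_coverture by blast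
  then have "\<phi> g x \<in> E" "\<phi> g x \<in> orbit G \<phi> x"
    using assms(2) element_image by (auto simp: orbit_def)
  with s x assms(3) orbit_trans show ?thesis by blast
qed

lemma (in group_action) orbit_eq_of_mem:
  assumes "X \<in> orbits G E \<phi>" and "s \<in> X"
  shows "orbit G \<phi> s = X"
proof -
  have "s \<in> E"
    using assms orbits_coverture by blast
  then have "orbit G \<phi> s \<in> orbits G E \<phi>" and "s \<in> orbit G \<phi> s"
    by (auto simp: orbits_def orbit_refl)
  with assms disjoint_union show ?thesis by blast
qed

lemma (in group_action) gset_iso_orbits:
  assumes T: "bij_betw T E E'" and eqv: "\<forall>g\<in>carrier G. \<forall>s\<in>E. T (\<phi> g s) = \<phi>' g (T s)"
  shows "bij_betw (image T) (orbits G E \<phi>) (orbits G E' \<phi>')"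
    and "X \<in> orbits G E \<phi> \<Longrightarrow> gset_iso G X \<phi> (T ` X) \<phi>'"
proof -
  have orbits_Pow: "orbits G E \<phi> \<subseteq> Pow E"
    using orbits_coverture by blast
  have "T ` orbit G \<phi> s = orbit G \<phi>' (T s)" if "s \<in> E" for s
    using eqv that unfolding orbit_def by force
  then have "image T ` orbits G E \<phi> = orbits G (T ` E) \<phi>'"
    unfolding orbits_eq_image image_image by simp
  moreover have "inj_on (image T) (orbits G E \<phi>)"
    using inj_on_image_Pow[OF bij_betw_imp_inj_on[OF T]] orbits_Pow by (rule inj_on_subset)
  ultimately show "bij_betw (image T) (orbits G E \<phi>) (orbits G E' \<phi>')"
    using T by (simp add: bij_betw_def)
  assume "X \<in> orbits G E \<phi>"
  then have "X \<subseteq> E"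
    using orbits_Pow by blast
  with T eqv show "gset_iso G X \<phi> (T ` X) \<phi>'"
    unfolding gset_iso_def by (meson bij_betw_subset subsetD)
qed

definition orbit_multiplicity ::
    "('g, 'x) monoid_scheme \<Rightarrow> 'a set \<Rightarrow> ('g \<Rightarrow> 'a \<Rightarrow> 'a) \<Rightarrow> 'b set \<Rightarrow> ('g \<Rightarrow> 'b \<Rightarrow> 'b) \<Rightarrow> nat" where
  "orbit_multiplicity G S \<phi> Orb \<tau> = card {X \<in> orbits G S \<phi>. gset_iso G X \<phi> Orb \<tau>}"

lemma multiplicity_in_eq_orbit_multiplicity:
  "multiplicity_in m S \<phi> Orb \<tau> = orbit_multiplicity (F0 m) S \<phi> Orb \<tau>"
  by (simp add: multiplicity_in_def orbit_multiplicity_def gset_iso_restr_act)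

lemma orbit_multiplicity_gset_iso_orbit:
  assumes "gset_iso G Orb \<tau> Orb' \<tau>'" and "\<And>g x. g \<in> carrier G \<Longrightarrow> x \<in> Orb \<Longrightarrow> \<tau> g x \<in> Orb"
  shows "orbit_multiplicity G S \<phi> Orb \<tau> = orbit_multiplicity G S \<phi> Orb' \<tau>'"
proof -
  have "gset_iso G X \<phi> Orb \<tau> \<longleftrightarrow> gset_iso G X \<phi> Orb' \<tau>'" for X
    using gset_iso_trans[OF _ assms(1)] gset_iso_trans[OF _ gset_iso_sym[OF assms]] by blast
  then show ?thesis
    unfolding orbit_multiplicity_def by simp
qed

lemma orbit_multiplicity_gset_iso:
  assumes "group_action G S \<phi>" and "gset_iso G S \<phi> S' \<phi>'"
  shows "orbit_multiplicity G S \<phi> Orb \<tau> = orbit_multiplicity G S' \<phi>' Orb \<tau>"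
proof -
  obtain T where T: "bij_betw T S S'" and eqv: "\<forall>g\<in>carrier G. \<forall>s\<in>S. T (\<phi> g s) = \<phi>' g (T s)"
    using assms(2) unfolding gset_iso_def by blast
  note orbs = group_action.gset_iso_orbits[OF assms(1) T eqv]
  have "gset_iso G (T ` X) \<phi>' Orb \<tau> \<longleftrightarrow> gset_iso G X \<phi> Orb \<tau>" if X: "X \<in> orbits G S \<phi>" for X
    using gset_iso_trans[OF orbs(2)[OF X]]
      gset_iso_trans[OF gset_iso_sym[OF orbs(2)[OF X] group_action.orbit_closed[OF assms(1) X]]]
    by blast
  then have "bij_betw (image T) {X \<in> orbits G S \<phi>. gset_iso G X \<phi> Orb \<tau>}
      {Y \<in> orbits G S' \<phi>'. gset_iso G Y \<phi>' Orb \<tau>}"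
    by (rule bij_betw_Collect[OF orbs(1)])
  then show ?thesis
    unfolding orbit_multiplicity_def by (rule bij_betw_same_card)
qed

lemma bij_betw_fun_upd_insert:
  assumes "bij_betw \<sigma> A (B - {b})" and "a \<notin> A" and "b \<in> B"
  shows "bij_betw (\<sigma>(a := b)) (insert a A) B"
proof -
  have "bij_betw (\<sigma>(a := b)) A (B - {b}) = bij_betw \<sigma> A (B - {b})"
    by (rule bij_betw_cong) (use assms(2) in auto)
  with assms(1) show ?thesis
    using notIn_Un_bij_betw3[of a A "\<sigma>(a := b)" "B - {b}"] assms(2,3) by (simp add: insert_absorb)
qed

lemma ex_bij_betw_matching_classes:
  fixes f :: "'a \<Rightarrow> 'c" and g :: "'b \<Rightarrow> 'c"
  assumes "finite A" and "finite B" and "card A = card B"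
    and refl: "\<And>a. a \<in> A \<Longrightarrow> r (f a) (f a)"
    and sym: "\<And>x y. x \<in> f ` A \<union> g ` B \<Longrightarrow> r x y \<Longrightarrow> r y x"
    and trans: "\<And>x y z. r x y \<Longrightarrow> r y z \<Longrightarrow> r x z"
    and count: "\<And>a. a \<in> A \<Longrightarrow> card {a' \<in> A. r (f a') (f a)} = card {b \<in> B. r (g b) (f a)}"
  shows "\<exists>\<sigma>. bij_betw \<sigma> A B \<and> (\<forall>a\<in>A. r (f a) (g (\<sigma> a)))"
  using assms(1-3) refl sym count
proof (induction A arbitrary: B rule: finite_induct)
  case empty
  then show ?case by (simp add: bij_betw_def)
next
  case (insert a A)
  have "0 < card {a' \<in> insert a A. r (f a') (f a)}"
    using insert.hyps(1) insert.prems(3) by (auto simp: card_gt_0_iff)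
  then have "0 < card {b \<in> B. r (g b) (f a)}"
    using insert.prems(5)[of a] by simp
  then obtain b where b: "b \<in> B" "r (g b) (f a)"
    by (auto simp: card_gt_0_iff)
  have "card {a'' \<in> A. r (f a'') (f a')} = card {b' \<in> B - {b}. r (g b') (f a')}" if a': "a' \<in> A" for a'
  proof (cases "r (f a) (f a')")
    case True
    have "{a'' \<in> A. r (f a'') (f a')} = {a'' \<in> insert a A. r (f a'') (f a')} - {a}"
      using insert.hyps(2) by auto
    then have "card {a'' \<in> A. r (f a'') (f a')} = card {a'' \<in> insert a A. r (f a'') (f a')} - 1"
      using True insert.hyps(1) by (simp add: card_Diff_singleton)
    also have "\<dots> = card {b' \<in> B. r (g b') (f a')} - 1"
      using insert.prems(5)[of a'] a' by simp
    also have "\<dots> = card ({b' \<in> B. r (g b') (f a')} - {b})"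
      using b trans[OF b(2) True] insert.prems(1) by (simp add: card_Diff_singleton)
    also have "{b' \<in> B. r (g b') (f a')} - {b} = {b' \<in> B - {b}. r (g b') (f a')}"
      by auto
    finally show ?thesis .
  next
    case False
    then have "\<not> r (g b) (f a')"
      using insert.prems(4)[of "g b" "f a"] b trans by blast
    moreover have "{a'' \<in> A. r (f a'') (f a')} = {a'' \<in> insert a A. r (f a'') (f a')}"
      using False by auto
    ultimately show ?thesis
      using a' insert.prems(5)[of a'] by (auto intro: arg_cong[where f = card])
  qed
  moreover have "card A = card (B - {b})"
    using insert.hyps insert.prems(2) b(1) by simp
  ultimately obtain \<sigma> where \<sigma>: "bij_betw \<sigma> A (B - {b})" "\<forall>a'\<in>A. r (f a') (g (\<sigma> a'))"
    using insert.IH[of "B - {b}"] insert.prems(1,3,4) by blast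
  have "bij_betw (\<sigma>(a := b)) (insert a A) B"
    using bij_betw_fun_upd_insert[OF \<sigma>(1) insert.hyps(2) b(1)] .
  moreover have "r (f a) (g b)"
    using insert.prems(4) b by blast
  then have "\<forall>a'\<in>insert a A. r (f a') (g ((\<sigma>(a := b)) a'))"
    using \<sigma>(2) insert.hyps(2) by auto
  ultimately show ?case
    by blast
qed

lemma (in group_action) disjoint_family_on_orbits:
  assumes "bij_betw \<sigma> A (orbits G E \<phi>)"
  shows "disjoint_family_on \<sigma> A"
proof -
  have "\<sigma> X \<inter> \<sigma> Y = {}" if "X \<in> A" "Y \<in> A" "X \<noteq> Y" for X Y
  proof -
    have "\<sigma> X \<noteq> \<sigma> Y"
      using that bij_betw_imp_inj_on[OF assms] by (auto dest: inj_onD)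
    with that bij_betwE[OF assms] disjoint_union show ?thesis
      by blast
  qed
  then show ?thesis
    by (simp add: disjoint_family_on_def)
qed

lemma (in group_action) gset_iso_if_orbitwise_iso:
  assumes act': "group_action G E' \<phi>'"
    and \<sigma>: "bij_betw \<sigma> (orbits G E \<phi>) (orbits G E' \<phi>')"
    and iso: "\<And>X. X \<in> orbits G E \<phi> \<Longrightarrow> gset_iso G X \<phi> (\<sigma> X) \<phi>'"
  shows "gset_iso G E \<phi> E' \<phi>'"
proof -
  obtain f where f: "\<And>X. X \<in> orbits G E \<phi> \<Longrightarrow> bij_betw (f X) X (\<sigma> X)"
    and eqv: "\<And>X g x. X \<in> orbits G E \<phi> \<Longrightarrow> g \<in> carrier G \<Longrightarrow> x \<in> X \<Longrightarrow>
                f X (\<phi> g x) = \<phi>' g (f X x)"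
    using iso unfolding gset_iso_def by metis
  define T where "T s = f (orbit G \<phi> s) s" for s
  have T_eq: "T s = f X s" if "X \<in> orbits G E \<phi>" "s \<in> X" for X s
    using that by (simp add: T_def orbit_eq_of_mem)
  have "disjoint_family_on \<sigma> (orbits G E \<phi>)"
    using group_action.disjoint_family_on_orbits[OF act' \<sigma>] .
  moreover have "bij_betw T X (\<sigma> X)" if "X \<in> orbits G E \<phi>" for X
  proof -
    have "bij_betw T X (\<sigma> X) = bij_betw (f X) X (\<sigma> X)"
      by (rule bij_betw_cong) (simp add: T_eq[OF that])
    with f[OF that] show ?thesis by simp
  qed
  ultimately have "bij_betw T (\<Union>X\<in>orbits G E \<phi>. X) (\<Union>X\<in>orbits G E \<phi>. \<sigma> X)"
    by (rule bij_betw_UNION_disjoint)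
  moreover have "(\<Union>X\<in>orbits G E \<phi>. \<sigma> X) = E'"
    using bij_betw_imp_surj_on[OF \<sigma>] group_action.orbits_coverture[OF act'] by simp
  ultimately have "bij_betw T E E'"
    using orbits_coverture by simp
  moreover have "T (\<phi> g s) = \<phi>' g (T s)" if "g \<in> carrier G" "s \<in> E" for g s
  proof -
    let ?X = "orbit G \<phi> s"
    have X: "?X \<in> orbits G E \<phi>" "s \<in> ?X"
      using \<open>s \<in> E\<close> by (auto simp: orbits_def orbit_refl)
    then show ?thesis
      using that T_eq[OF X(1)] eqv[OF X(1)] orbit_closed[OF X(1)] by simp
  qed
  ultimately show ?thesis
    unfolding gset_iso_def by blast
qed

lemma gset_iso_if_orbit_multiplicities_eq:
  fixes \<phi> \<phi>' :: "'g \<Rightarrow> 'a \<Rightarrow> 'a"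
  assumes act: "group_action G S \<phi>" and act': "group_action G S' \<phi>'"
    and "finite S" and "finite S'" and "card (orbits G S \<phi>) = card (orbits G S' \<phi>')"
    and mult: "\<And>X. X \<in> orbits G S \<phi> \<Longrightarrow>
      orbit_multiplicity G S \<phi> X \<phi> = orbit_multiplicity G S' \<phi>' X \<phi>"
  shows "gset_iso G S \<phi> S' \<phi>'"
proof -
  \<comment> \<open>Orbits are compared as pairs (orbit, action), as S and S' may share orbits with different actions.\<close>
  define r :: "'a set \<times> ('g \<Rightarrow> 'a \<Rightarrow> 'a) \<Rightarrow> 'a set \<times> ('g \<Rightarrow> 'a \<Rightarrow> 'a) \<Rightarrow> bool"
    where "r = (\<lambda>(X, \<alpha>) (Y, \<beta>). gset_iso G X \<alpha> Y \<beta>)"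
  let ?objs = "(\<lambda>X. (X, \<phi>)) ` orbits G S \<phi> \<union> (\<lambda>Y. (Y, \<phi>')) ` orbits G S' \<phi>'"
  have fin: "finite (orbits G S \<phi>)" "finite (orbits G S' \<phi>')"
    using \<open>finite S\<close> \<open>finite S'\<close> by (simp_all add: orbits_eq_image)
  have r_refl: "r (X, \<phi>) (X, \<phi>)" for X
    by (simp add: r_def gset_iso_refl)
  have r_sym: "r y x" if "x \<in> ?objs" and "r x y" for x y
  proof -
    obtain X \<alpha> Y \<beta> where xy: "x = (X, \<alpha>)" "y = (Y, \<beta>)"
      by fastforce
    have "\<alpha> g s \<in> X" if "g \<in> carrier G" "s \<in> X" for g s
      using \<open>x \<in> ?objs\<close> that group_action.orbit_closed[OF act] group_action.orbit_closed[OF act']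
      unfolding xy by blast
    with \<open>r x y\<close> show ?thesis
      unfolding r_def xy by (simp add: gset_iso_sym)
  qed
  have r_trans: "r x z" if "r x y" and "r y z" for x y z
    using that gset_iso_trans unfolding r_def by (auto split: prod.splits)
  have r_count: "card {Y \<in> orbits G S \<phi>. r (Y, \<phi>) (X, \<phi>)} = card {Y \<in> orbits G S' \<phi>'. r (Y, \<phi>') (X, \<phi>)}"
    if "X \<in> orbits G S \<phi>" for X
    using mult[OF that] by (simp add: r_def orbit_multiplicity_def)
  have "\<exists>\<sigma>. bij_betw \<sigma> (orbits G S \<phi>) (orbits G S' \<phi>') \<and>
      (\<forall>X\<in>orbits G S \<phi>. r (X, \<phi>) (\<sigma> X, \<phi>'))"
    by (rule ex_bij_betw_matching_classes[where f = "\<lambda>X. (X, \<phi>)" and g = "\<lambda>Y. (Y, \<phi>')"],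
        (fact fin \<open>card (orbits G S \<phi>) = card (orbits G S' \<phi>')\<close>
          | (rule r_refl r_sym r_trans r_count; assumption))+)
  then obtain \<sigma> where "bij_betw \<sigma> (orbits G S \<phi>) (orbits G S' \<phi>')"
    and "\<forall>X\<in>orbits G S \<phi>. r (X, \<phi>) (\<sigma> X, \<phi>')"
    by blast
  then show ?thesis
    using group_action.gset_iso_if_orbitwise_iso[OF act act'] unfolding r_def by simp
qed

section \<open>Twisting an action by an automorphism\<close>

lemma (in group) inv_mult_cancel_left: "x \<in> carrier G \<Longrightarrow> y \<in> carrier G \<Longrightarrow> inv x \<otimes> (x \<otimes> y) = y"
  by (simp add: m_assoc[symmetric])

lemma (in group) mult_inv_cancel_left: "x \<in> carrier G \<Longrightarrow> y \<in> carrier G \<Longrightarrow> x \<otimes> (inv x \<otimes> y) = y"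
  by (simp add: m_assoc[symmetric])

lemma (in normal) conj_image:
  assumes "a \<in> carrier G"
  shows "(\<lambda>h. inv a \<otimes> h \<otimes> a) ` H = H"
proof
  show "(\<lambda>h. inv a \<otimes> h \<otimes> a) ` H \<subseteq> H"
    using assms inv_op_closed1 by blast
  show "H \<subseteq> (\<lambda>h. inv a \<otimes> h \<otimes> a) ` H"
  proof
    fix h assume h: "h \<in> H"
    then have "h = inv a \<otimes> (a \<otimes> h \<otimes> inv a) \<otimes> a"
      using assms by (simp add: m_assoc mem_carrier inv_mult_cancel_left)
    with h assms inv_op_closed2 show "h \<in> (\<lambda>h. inv a \<otimes> h \<otimes> a) ` H"
      by blast
  qed
qed

lemma (in normal) conj_hom:
  assumes "a \<in> carrier G"
  shows "(\<lambda>h. inv a \<otimes> h \<otimes> a) \<in> hom (G\<lparr>carrier := H\<rparr>) (G\<lparr>carrier := H\<rparr>)"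
  using assms inv_op_closed1 by (auto simp: hom_def m_assoc mem_carrier mult_inv_cancel_left)

lemma group_action_precomp:
  assumes "group_action H S \<phi>" and "c \<in> hom H H"
  shows "group_action H S (\<lambda>g. \<phi> (c g))"
  using assms unfolding group_action_def group_hom_def group_hom_axioms_def hom_def
  by (auto simp: Pi_def)

lemma orbits_precomp:
  assumes "c ` carrier H = carrier H"
  shows "orbits H S (\<lambda>g. \<phi> (c g)) = orbits H S \<phi>"
proof -
  have "orbit H (\<lambda>g. \<phi> (c g)) x = (\<lambda>g. \<phi> g x) ` (c ` carrier H)" for x
    unfolding orbit_eq_image image_image ..
  then have "orbit H (\<lambda>g. \<phi> (c g)) x = orbit H \<phi> x" for x
    unfolding assms orbit_eq_image .
  then show ?thesis
    by (simp add: orbits_def)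
qed

lemma gset_iso_precomp:
  assumes "c ` carrier H = carrier H"
  shows "gset_iso H X (\<lambda>g. \<alpha> (c g)) Y (\<lambda>g. \<beta> (c g)) \<longleftrightarrow> gset_iso H X \<alpha> Y \<beta>"
proof -
  have "(\<forall>g\<in>carrier H. Q (c g)) \<longleftrightarrow> (\<forall>g\<in>c ` carrier H. Q g)" for Q
    by blast
  then have ball: "(\<forall>g\<in>carrier H. Q (c g)) \<longleftrightarrow> (\<forall>g\<in>carrier H. Q g)" for Q
    unfolding assms .
  have "(\<forall>g\<in>carrier H. \<forall>x\<in>X. f (\<alpha> (c g) x) = \<beta> (c g) (f x)) \<longleftrightarrow>
        (\<forall>g\<in>carrier H. \<forall>x\<in>X. f (\<alpha> g x) = \<beta> g (f x))" for f
    using ball[of "\<lambda>g. \<forall>x\<in>X. f (\<alpha> g x) = \<beta> g (f x)"] by simp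
  then show ?thesis
    by (simp add: gset_iso_def)
qed

lemma orbit_multiplicity_precomp:
  assumes "c ` carrier H = carrier H"
  shows "orbit_multiplicity H S (\<lambda>g. \<phi> (c g)) Orb (\<lambda>g. \<tau> (c g)) = orbit_multiplicity H S \<phi> Orb \<tau>"
  by (simp add: orbit_multiplicity_def orbits_precomp[OF assms] gset_iso_precomp[OF assms])

section \<open>Extending an action from the kernel of a map onto the integers\<close>

lemma intertwining_nat_pow:
  assumes "group G" and "group B" and "K \<lhd> G"
    and z: "z \<in> carrier G" and t: "t \<in> carrier B"
    and \<phi>K: "\<And>h. h \<in> K \<Longrightarrow> \<phi> h \<in> carrier B"
    and conj: "\<And>h. h \<in> K \<Longrightarrow> t \<otimes>\<^bsub>B\<^esub> \<phi> h = \<phi> (z \<otimes>\<^bsub>G\<^esub> h \<otimes>\<^bsub>G\<^esub> inv\<^bsub>G\<^esub> z) \<otimes>\<^bsub>B\<^esub> t"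
    and "h \<in> K"
  shows "t [^]\<^bsub>B\<^esub> (n::nat) \<otimes>\<^bsub>B\<^esub> \<phi> h
    = \<phi> (z [^]\<^bsub>G\<^esub> n \<otimes>\<^bsub>G\<^esub> h \<otimes>\<^bsub>G\<^esub> inv\<^bsub>G\<^esub> (z [^]\<^bsub>G\<^esub> n)) \<otimes>\<^bsub>B\<^esub> t [^]\<^bsub>B\<^esub> n"
proof -
  interpret G: group G by fact
  interpret B: group B by fact
  interpret K: normal K G by fact
  show ?thesis
    using \<open>h \<in> K\<close>
  proof (induction n arbitrary: h)
    case 0
    then show ?case
      using \<phi>K by (simp add: K.mem_carrier)
  next
    case (Suc n)
    have h': "z \<otimes>\<^bsub>G\<^esub> h \<otimes>\<^bsub>G\<^esub> inv\<^bsub>G\<^esub> z \<in> K"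
      using K.inv_op_closed2[OF z Suc.prems] .
    have "t [^]\<^bsub>B\<^esub> Suc n \<otimes>\<^bsub>B\<^esub> \<phi> h = t [^]\<^bsub>B\<^esub> n \<otimes>\<^bsub>B\<^esub> (t \<otimes>\<^bsub>B\<^esub> \<phi> h)"
      using t \<phi>K[OF Suc.prems] by (simp add: B.m_assoc)
    also have "\<dots> = t [^]\<^bsub>B\<^esub> n \<otimes>\<^bsub>B\<^esub> \<phi> (z \<otimes>\<^bsub>G\<^esub> h \<otimes>\<^bsub>G\<^esub> inv\<^bsub>G\<^esub> z) \<otimes>\<^bsub>B\<^esub> t"
      using t \<phi>K[OF h'] by (simp add: conj[OF Suc.prems] B.m_assoc)
    also have "\<dots> = \<phi> (z [^]\<^bsub>G\<^esub> n \<otimes>\<^bsub>G\<^esub> (z \<otimes>\<^bsub>G\<^esub> h \<otimes>\<^bsub>G\<^esub> inv\<^bsub>G\<^esub> z) \<otimes>\<^bsub>G\<^esub> inv\<^bsub>G\<^esub> (z [^]\<^bsub>G\<^esub> n))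
        \<otimes>\<^bsub>B\<^esub> t [^]\<^bsub>B\<^esub> n \<otimes>\<^bsub>B\<^esub> t"
      by (simp only: Suc.IH[OF h'])
    also have "\<dots> = \<phi> (z [^]\<^bsub>G\<^esub> n \<otimes>\<^bsub>G\<^esub> (z \<otimes>\<^bsub>G\<^esub> h \<otimes>\<^bsub>G\<^esub> inv\<^bsub>G\<^esub> z) \<otimes>\<^bsub>G\<^esub> inv\<^bsub>G\<^esub> (z [^]\<^bsub>G\<^esub> n))
        \<otimes>\<^bsub>B\<^esub> t [^]\<^bsub>B\<^esub> Suc n"
      using \<phi>K[OF K.inv_op_closed2[OF G.nat_pow_closed[OF z] h']] t by (simp add: B.m_assoc)
    also have "z [^]\<^bsub>G\<^esub> n \<otimes>\<^bsub>G\<^esub> (z \<otimes>\<^bsub>G\<^esub> h \<otimes>\<^bsub>G\<^esub> inv\<^bsub>G\<^esub> z) \<otimes>\<^bsub>G\<^esub> inv\<^bsub>G\<^esub> (z [^]\<^bsub>G\<^esub> n)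
        = z [^]\<^bsub>G\<^esub> Suc n \<otimes>\<^bsub>G\<^esub> h \<otimes>\<^bsub>G\<^esub> inv\<^bsub>G\<^esub> (z [^]\<^bsub>G\<^esub> Suc n)"
      using z Suc.prems by (simp add: G.m_assoc G.inv_mult_group K.mem_carrier)
    finally show ?case .
  qed
qed

lemma intertwining_inv:
  assumes "group G" and "group B" and "K \<lhd> G"
    and z: "z \<in> carrier G" and t: "t \<in> carrier B"
    and \<phi>K: "\<And>h. h \<in> K \<Longrightarrow> \<phi> h \<in> carrier B"
    and conj: "\<And>h. h \<in> K \<Longrightarrow> t \<otimes>\<^bsub>B\<^esub> \<phi> h = \<phi> (z \<otimes>\<^bsub>G\<^esub> h \<otimes>\<^bsub>G\<^esub> inv\<^bsub>G\<^esub> z) \<otimes>\<^bsub>B\<^esub> t"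
    and h: "h \<in> K"
  shows "inv\<^bsub>B\<^esub> t \<otimes>\<^bsub>B\<^esub> \<phi> h = \<phi> (inv\<^bsub>G\<^esub> z \<otimes>\<^bsub>G\<^esub> h \<otimes>\<^bsub>G\<^esub> inv\<^bsub>G\<^esub> (inv\<^bsub>G\<^esub> z)) \<otimes>\<^bsub>B\<^esub> inv\<^bsub>B\<^esub> t"
proof -
  interpret G: group G by fact
  interpret B: group B by fact
  interpret K: normal K G by fact
  let ?h' = "inv\<^bsub>G\<^esub> z \<otimes>\<^bsub>G\<^esub> h \<otimes>\<^bsub>G\<^esub> z"
  have h': "?h' \<in> K"
    using K.inv_op_closed1[OF z h] .
  have "z \<otimes>\<^bsub>G\<^esub> ?h' \<otimes>\<^bsub>G\<^esub> inv\<^bsub>G\<^esub> z = h"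
    using z h by (simp add: G.m_assoc K.mem_carrier G.mult_inv_cancel_left)
  then have conj': "t \<otimes>\<^bsub>B\<^esub> \<phi> ?h' = \<phi> h \<otimes>\<^bsub>B\<^esub> t"
    using conj[OF h'] by simp
  have "\<phi> ?h' \<otimes>\<^bsub>B\<^esub> inv\<^bsub>B\<^esub> t = inv\<^bsub>B\<^esub> t \<otimes>\<^bsub>B\<^esub> (t \<otimes>\<^bsub>B\<^esub> \<phi> ?h') \<otimes>\<^bsub>B\<^esub> inv\<^bsub>B\<^esub> t"
    using t \<phi>K[OF h'] by (simp add: B.inv_mult_cancel_left)
  also have "\<dots> = inv\<^bsub>B\<^esub> t \<otimes>\<^bsub>B\<^esub> (\<phi> h \<otimes>\<^bsub>B\<^esub> t) \<otimes>\<^bsub>B\<^esub> inv\<^bsub>B\<^esub> t"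
    by (simp only: conj')
  also have "\<dots> = inv\<^bsub>B\<^esub> t \<otimes>\<^bsub>B\<^esub> \<phi> h"
    using t \<phi>K[OF h] by (simp add: B.m_assoc)
  finally show ?thesis
    using z by simp
qed

lemma intertwining_int_pow:
  assumes "group G" and "group B" and "K \<lhd> G"
    and z: "z \<in> carrier G" and t: "t \<in> carrier B"
    and \<phi>K: "\<And>h. h \<in> K \<Longrightarrow> \<phi> h \<in> carrier B"
    and conj: "\<And>h. h \<in> K \<Longrightarrow> t \<otimes>\<^bsub>B\<^esub> \<phi> h = \<phi> (z \<otimes>\<^bsub>G\<^esub> h \<otimes>\<^bsub>G\<^esub> inv\<^bsub>G\<^esub> z) \<otimes>\<^bsub>B\<^esub> t"
    and "h \<in> K"
  shows "t [^]\<^bsub>B\<^esub> (n::int) \<otimes>\<^bsub>B\<^esub> \<phi> h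
    = \<phi> (z [^]\<^bsub>G\<^esub> n \<otimes>\<^bsub>G\<^esub> h \<otimes>\<^bsub>G\<^esub> inv\<^bsub>G\<^esub> (z [^]\<^bsub>G\<^esub> n)) \<otimes>\<^bsub>B\<^esub> t [^]\<^bsub>B\<^esub> n"
proof -
  interpret G: group G by fact
  interpret B: group B by fact
  interpret K: normal K G by fact
  show ?thesis
  proof (cases "0 \<le> n")
    case True
    then obtain k where "n = int k"
      using nonneg_int_cases by blast
    then show ?thesis
      using intertwining_nat_pow[where \<phi> = \<phi>, OF assms] by (simp add: int_pow_int)
  next
    case False
    define k where "k = nat (- n)"
    have n: "n = - int k"
      using False by (simp add: k_def)
    from intertwining_nat_pow[where \<phi> = \<phi>, OF assms(1-3) G.inv_closed[OF z] B.inv_closed[OF t] \<phi>K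
        intertwining_inv[where \<phi> = \<phi>, OF assms(1-7)] \<open>h \<in> K\<close>]
    show ?thesis
      using z t by (simp add: n G.int_pow_neg_int B.int_pow_neg_int G.nat_pow_inv B.nat_pow_inv)
  qed
qed

lemma mult_int_pow_neg_in_kernel:
  assumes "group_hom G integer_group \<upsilon>" and "z \<in> carrier G" and "\<upsilon> z = 1" and "g \<in> carrier G"
  shows "g \<otimes>\<^bsub>G\<^esub> z [^]\<^bsub>G\<^esub> (- \<upsilon> g) \<in> kernel G integer_group \<upsilon>"
proof -
  interpret group_hom G integer_group \<upsilon> by fact
  show ?thesis
    using assms(2-4) hom_int_pow[OF assms(2)] by (simp add: kernel_def)
qed

lemma (in group) mult_int_pow_neg_decompose:
  fixes a b :: int
  assumes "u \<in> carrier G" and "v \<in> carrier G" and "z \<in> carrier G"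
  shows "u \<otimes> v \<otimes> z [^] (- (a + b)) = u \<otimes> z [^] (- a) \<otimes> (z [^] a \<otimes> (v \<otimes> z [^] (- b)) \<otimes> inv (z [^] a))"
proof -
  have "z [^] (- (a + b)) = z [^] (- b) \<otimes> inv (z [^] a)"
    using assms(3) int_pow_mult[OF assms(3), of "- b" "- a"] by (simp add: int_pow_neg add.commute)
  then show ?thesis
    using assms by (simp add: m_assoc int_pow_neg inv_mult_cancel_left)
qed

(* G is the semidirect product of the kernel and the cyclic group generated by z:
   psi sends g = k z^n, where n = upsilon g, to phi(k) t^n. *)
lemma hom_extension_from_kernel:
  assumes \<upsilon>: "group_hom G integer_group \<upsilon>" and z: "z \<in> carrier G" "\<upsilon> z = 1"
    and "group B" and \<phi>: "\<phi> \<in> hom (G\<lparr>carrier := kernel G integer_group \<upsilon>\<rparr>) B"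
    and t: "t \<in> carrier B"
    and conj: "\<And>h. h \<in> kernel G integer_group \<upsilon> \<Longrightarrow>
      t \<otimes>\<^bsub>B\<^esub> \<phi> h = \<phi> (z \<otimes>\<^bsub>G\<^esub> h \<otimes>\<^bsub>G\<^esub> inv\<^bsub>G\<^esub> z) \<otimes>\<^bsub>B\<^esub> t"
  defines "\<psi> \<equiv> \<lambda>g. \<phi> (g \<otimes>\<^bsub>G\<^esub> z [^]\<^bsub>G\<^esub> (- \<upsilon> g)) \<otimes>\<^bsub>B\<^esub> t [^]\<^bsub>B\<^esub> \<upsilon> g"
  shows "\<psi> \<in> hom G B" and "\<And>h. h \<in> kernel G integer_group \<upsilon> \<Longrightarrow> \<psi> h = \<phi> h"
proof -
  interpret \<upsilon>: group_hom G integer_group \<upsilon> by fact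
  interpret B: group B by fact
  let ?K = "kernel G integer_group \<upsilon>"
  have K: "?K \<lhd> G"
    by (rule \<upsilon>.normal_kernel)
  have \<phi>K: "\<phi> h \<in> carrier B" if "h \<in> ?K" for h
    using \<phi> that by (auto simp: hom_def)
  have \<phi>_mult: "\<phi> (h \<otimes>\<^bsub>G\<^esub> k) = \<phi> h \<otimes>\<^bsub>B\<^esub> \<phi> k" if "h \<in> ?K" "k \<in> ?K" for h k
    using \<phi> that by (simp add: hom_def)
  define p where "p g = g \<otimes>\<^bsub>G\<^esub> z [^]\<^bsub>G\<^esub> (- \<upsilon> g)" for g
  have pK: "p g \<in> ?K" if "g \<in> carrier G" for g
    unfolding p_def using mult_int_pow_neg_in_kernel[OF \<upsilon> z that] .
  have p_mult: "p (u \<otimes>\<^bsub>G\<^esub> v) = p u \<otimes>\<^bsub>G\<^esub> (z [^]\<^bsub>G\<^esub> \<upsilon> u \<otimes>\<^bsub>G\<^esub> p v \<otimes>\<^bsub>G\<^esub> inv\<^bsub>G\<^esub> (z [^]\<^bsub>G\<^esub> \<upsilon> u))"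
    if "u \<in> carrier G" and "v \<in> carrier G" for u v
    using \<upsilon>.G.mult_int_pow_neg_decompose[OF that z(1), where a = "\<upsilon> u" and b = "\<upsilon> v"] that
    by (simp add: p_def)
  show "\<psi> \<in> hom G B"
  proof (rule homI)
    show "\<psi> g \<in> carrier B" if "g \<in> carrier G" for g
      using \<phi>K[OF pK[OF that]] t by (simp add: \<psi>_def p_def[symmetric])
    show "\<psi> (u \<otimes>\<^bsub>G\<^esub> v) = \<psi> u \<otimes>\<^bsub>B\<^esub> \<psi> v" if u: "u \<in> carrier G" and v: "v \<in> carrier G" for u v
    proof -
      let ?a = "\<upsilon> u" and ?b = "\<upsilon> v"
      let ?pv' = "z [^]\<^bsub>G\<^esub> ?a \<otimes>\<^bsub>G\<^esub> p v \<otimes>\<^bsub>G\<^esub> inv\<^bsub>G\<^esub> (z [^]\<^bsub>G\<^esub> ?a)"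
      have pv': "?pv' \<in> ?K"
        using normal.inv_op_closed2[OF K \<upsilon>.G.int_pow_closed[OF z(1)] pK[OF v]] .
      have "\<psi> u \<otimes>\<^bsub>B\<^esub> \<psi> v = \<phi> (p u) \<otimes>\<^bsub>B\<^esub> (t [^]\<^bsub>B\<^esub> ?a \<otimes>\<^bsub>B\<^esub> \<phi> (p v)) \<otimes>\<^bsub>B\<^esub> t [^]\<^bsub>B\<^esub> ?b"
        using \<phi>K[OF pK[OF u]] \<phi>K[OF pK[OF v]] t by (simp add: \<psi>_def p_def[symmetric] B.m_assoc)
      also have "\<dots> = \<phi> (p u) \<otimes>\<^bsub>B\<^esub> (\<phi> ?pv' \<otimes>\<^bsub>B\<^esub> t [^]\<^bsub>B\<^esub> ?a) \<otimes>\<^bsub>B\<^esub> t [^]\<^bsub>B\<^esub> ?b"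
        using intertwining_int_pow[where \<phi> = \<phi>, OF \<upsilon>.G.is_group \<open>group B\<close> K z(1) t \<phi>K conj pK[OF v]]
        by simp
      also have "\<dots> = \<phi> (p u \<otimes>\<^bsub>G\<^esub> ?pv') \<otimes>\<^bsub>B\<^esub> t [^]\<^bsub>B\<^esub> (?a + ?b)"
        using \<phi>K[OF pK[OF u]] \<phi>K[OF pv'] t
        by (simp add: \<phi>_mult[OF pK[OF u] pv'] B.int_pow_mult B.m_assoc)
      also have "\<dots> = \<psi> (u \<otimes>\<^bsub>G\<^esub> v)"
        using u v by (simp add: \<psi>_def p_def[symmetric] p_mult)
      finally show ?thesis ..
    qed
  qed
  show "\<psi> h = \<phi> h" if "h \<in> ?K" for h
    using that \<phi>K[OF that] by (simp add: \<psi>_def kernel_def)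
qed

lemma gset_iso_conj_if_extends:
  assumes \<psi>: "group_action G S \<psi>" and "K \<lhd> G" and z: "z \<in> carrier G"
    and ext: "\<forall>h\<in>K. \<psi> h = \<phi> h"
  shows "gset_iso (G\<lparr>carrier := K\<rparr>) S (\<lambda>h. \<phi> (inv\<^bsub>G\<^esub> z \<otimes>\<^bsub>G\<^esub> h \<otimes>\<^bsub>G\<^esub> z)) S \<phi>"
proof -
  interpret K: normal K G by fact
  have "\<psi> z (\<phi> (inv\<^bsub>G\<^esub> z \<otimes>\<^bsub>G\<^esub> h \<otimes>\<^bsub>G\<^esub> z) s) = \<phi> h (\<psi> z s)" if h: "h \<in> K" and s: "s \<in> S" for h s
  proof -
    have "\<psi> z (\<phi> (inv\<^bsub>G\<^esub> z \<otimes>\<^bsub>G\<^esub> h \<otimes>\<^bsub>G\<^esub> z) s) = \<psi> (z \<otimes>\<^bsub>G\<^esub> (inv\<^bsub>G\<^esub> z \<otimes>\<^bsub>G\<^esub> h \<otimes>\<^bsub>G\<^esub> z)) s"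
      using ext K.inv_op_closed1[OF z h] group_action.composition_rule[OF \<psi> s z] K.mem_carrier
      by simp
    also have "z \<otimes>\<^bsub>G\<^esub> (inv\<^bsub>G\<^esub> z \<otimes>\<^bsub>G\<^esub> h \<otimes>\<^bsub>G\<^esub> z) = h \<otimes>\<^bsub>G\<^esub> z"
      using z h by (simp add: K.m_assoc K.mult_inv_cancel_left K.mem_carrier)
    also have "\<psi> (h \<otimes>\<^bsub>G\<^esub> z) s = \<phi> h (\<psi> z s)"
      using ext h group_action.composition_rule[OF \<psi> s _ z] K.mem_carrier by simp
    finally show ?thesis .
  qed
  moreover have "bij_betw (\<psi> z) S S"
    using group_action.bij_prop0[OF \<psi> z] by (simp add: Bij_def)
  ultimately show ?thesis
    unfolding gset_iso_def by auto
qed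

lemma extends_if_gset_iso_conj:
  assumes \<upsilon>: "group_hom G integer_group \<upsilon>" and z: "z \<in> carrier G" "\<upsilon> z = 1"
    and act: "group_action (G\<lparr>carrier := kernel G integer_group \<upsilon>\<rparr>) S \<phi>"
    and iso: "gset_iso (G\<lparr>carrier := kernel G integer_group \<upsilon>\<rparr>) S (\<lambda>h. \<phi> (inv\<^bsub>G\<^esub> z \<otimes>\<^bsub>G\<^esub> h \<otimes>\<^bsub>G\<^esub> z)) S \<phi>"
  shows "\<exists>\<psi>. group_action G S \<psi> \<and> (\<forall>h\<in>kernel G integer_group \<upsilon>. \<psi> h = \<phi> h)"
proof -
  interpret \<upsilon>: group_hom G integer_group \<upsilon> by fact
  let ?K = "kernel G integer_group \<upsilon>"
  interpret K: normal ?K G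
    by (rule \<upsilon>.normal_kernel)
  have \<phi>_hom: "\<phi> \<in> hom (G\<lparr>carrier := ?K\<rparr>) (BijGroup S)"
    using act by (simp add: group_action_def group_hom_def group_hom_axioms_def)
  then have \<phi>B: "\<phi> h \<in> carrier (BijGroup S)" if "h \<in> ?K" for h
    using that by (auto simp: hom_def)
  obtain T where T: "bij_betw T S S"
    and eqv: "\<forall>h\<in>?K. \<forall>s\<in>S. T (\<phi> (inv\<^bsub>G\<^esub> z \<otimes>\<^bsub>G\<^esub> h \<otimes>\<^bsub>G\<^esub> z) s) = \<phi> h (T s)"
    using iso unfolding gset_iso_def by auto
  define t where "t = restrict T S"
  have t: "t \<in> carrier (BijGroup S)"
    using T by (simp add: t_def BijGroup_def Bij_def bij_betw_cong[of S "restrict T S" T])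
  have "t \<otimes>\<^bsub>BijGroup S\<^esub> \<phi> h = \<phi> (z \<otimes>\<^bsub>G\<^esub> h \<otimes>\<^bsub>G\<^esub> inv\<^bsub>G\<^esub> z) \<otimes>\<^bsub>BijGroup S\<^esub> t"
    if h: "h \<in> ?K" for h
  proof -
    let ?h' = "z \<otimes>\<^bsub>G\<^esub> h \<otimes>\<^bsub>G\<^esub> inv\<^bsub>G\<^esub> z"
    have h': "?h' \<in> ?K"
      using K.inv_op_closed2[OF z(1) h] .
    have "inv\<^bsub>G\<^esub> z \<otimes>\<^bsub>G\<^esub> ?h' \<otimes>\<^bsub>G\<^esub> z = h"
      using z h by (simp add: \<upsilon>.G.m_assoc \<upsilon>.G.inv_mult_cancel_left K.mem_carrier)
    then have "T (\<phi> h s) = \<phi> ?h' (T s)" if "s \<in> S" for s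
      using eqv h' that by metis
    then have "compose S t (\<phi> h) = compose S (\<phi> ?h') t"
      using \<phi>B[OF h] by (auto simp: compose_def t_def BijGroup_def Bij_def bij_betw_apply)
    then show ?thesis
      using t \<phi>B[OF h] \<phi>B[OF h'] by (simp add: BijGroup_def)
  qed
  from hom_extension_from_kernel[OF \<upsilon> z group_BijGroup \<phi>_hom t this]
  obtain \<psi> where "\<psi> \<in> hom G (BijGroup S)" "\<forall>h\<in>?K. \<psi> h = \<phi> h"
    by blast
  then show ?thesis
    unfolding group_action_def group_hom_def group_hom_axioms_def
    using \<upsilon>.G.is_group group_BijGroup by blast
qed

lemma group_action_extension_iff:
  assumes \<upsilon>: "group_hom G integer_group \<upsilon>" and z: "z \<in> carrier G" "\<upsilon> z = 1"
    and act: "group_action (G\<lparr>carrier := kernel G integer_group \<upsilon>\<rparr>) S \<phi>"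
  shows "(\<exists>\<psi>. group_action G S \<psi> \<and> (\<forall>h\<in>kernel G integer_group \<upsilon>. \<psi> h = \<phi> h)) \<longleftrightarrow>
    gset_iso (G\<lparr>carrier := kernel G integer_group \<upsilon>\<rparr>) S (\<lambda>h. \<phi> (inv\<^bsub>G\<^esub> z \<otimes>\<^bsub>G\<^esub> h \<otimes>\<^bsub>G\<^esub> z)) S \<phi>"
  using gset_iso_conj_if_extends[OF _ group_hom.normal_kernel[OF \<upsilon>] z(1)]
    extends_if_gset_iso_conj[OF assms]
  by blast

section \<open>Shifting by powers of z_1\<close>

lemma F0_conj_z1_pow:
  fixes k :: int
  assumes "1 \<le> m"
  shows "(\<lambda>g. inv\<^bsub>FG m\<^esub> (z1 [^]\<^bsub>FG m\<^esub> k) \<otimes>\<^bsub>FG m\<^esub> g \<otimes>\<^bsub>FG m\<^esub> z1 [^]\<^bsub>FG m\<^esub> k) ` carrier (F0 m)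
      = carrier (F0 m)"
    and "(\<lambda>g. inv\<^bsub>FG m\<^esub> (z1 [^]\<^bsub>FG m\<^esub> k) \<otimes>\<^bsub>FG m\<^esub> g \<otimes>\<^bsub>FG m\<^esub> z1 [^]\<^bsub>FG m\<^esub> k) \<in> hom (F0 m) (F0 m)"
  using normal.conj_image[OF group_hom.normal_kernel[OF group_hom_upsilon], of "z1 [^]\<^bsub>FG m\<^esub> k"]
    normal.conj_hom[OF group_hom.normal_kernel[OF group_hom_upsilon], of "z1 [^]\<^bsub>FG m\<^esub> k"]
    group.int_pow_closed[OF group_FG z1_in_carrier[OF assms]]
  by (simp_all add: F0_eq_kernel)

lemma group_action_zshift:
  "1 \<le> m \<Longrightarrow> group_action (F0 m) S \<phi> \<Longrightarrow> group_action (F0 m) S (zshift m k \<phi>)"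
  unfolding zshift_def by (erule group_action_precomp[OF _ F0_conj_z1_pow(2)])

lemma orbits_zshift: "1 \<le> m \<Longrightarrow> orbits (F0 m) S (zshift m k \<phi>) = orbits (F0 m) S \<phi>"
  unfolding zshift_def by (rule orbits_precomp[OF F0_conj_z1_pow(1)])

lemma gset_iso_zshift:
  "1 \<le> m \<Longrightarrow> gset_iso (F0 m) X (zshift m k \<alpha>) Y (zshift m k \<beta>) \<longleftrightarrow> gset_iso (F0 m) X \<alpha> Y \<beta>"
  unfolding zshift_def by (rule gset_iso_precomp[OF F0_conj_z1_pow(1)])

lemma orbit_multiplicity_zshift:
  "1 \<le> m \<Longrightarrow> orbit_multiplicity (F0 m) S (zshift m k \<phi>) Orb (zshift m k \<tau>)
    = orbit_multiplicity (F0 m) S \<phi> Orb \<tau>"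
  unfolding zshift_def by (rule orbit_multiplicity_precomp[OF F0_conj_z1_pow(1)])

lemma zshift_closed:
  assumes "1 \<le> m" and "\<And>g x. g \<in> carrier (F0 m) \<Longrightarrow> x \<in> X \<Longrightarrow> \<alpha> g x \<in> X"
  shows "g \<in> carrier (F0 m) \<Longrightarrow> x \<in> X \<Longrightarrow> zshift m k \<alpha> g x \<in> X"
  using assms F0_conj_z1_pow(1)[OF assms(1)] unfolding zshift_def by blast

lemma strongly_finite_transitive_gset_iso:
  assumes m: "1 \<le> m" and sft: "strongly_finite_transitive m X \<alpha>"
    and iso: "gset_iso (F0 m) X \<alpha> Y \<beta>" and act: "group_action (F0 m) Y \<beta>"
  shows "strongly_finite_transitive m Y \<beta>"
proof -
  obtain k :: int where trans: "transitive_action (F0 m) X \<alpha>" and "X \<noteq> {}" "finite X" "k > 0"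
    and periodic: "gset_iso (F0 m) X (zshift m k \<alpha>) X \<alpha>"
    using sft unfolding strongly_finite_transitive_def by blast
  obtain f where "bij_betw f X Y"
    using iso unfolding gset_iso_def by blast
  then have "Y \<noteq> {}" "finite Y"
    using \<open>X \<noteq> {}\<close> \<open>finite X\<close> bij_betw_finite bij_betw_imp_empty_iff by blast+
  have closed: "\<alpha> g x \<in> X" if "g \<in> carrier (F0 m)" "x \<in> X" for g x
    using group_action.element_image[OF transitive_action.axioms(1)[OF trans] that refl] .
  have "gset_iso (F0 m) X (zshift m k \<alpha>) Y (zshift m k \<beta>)"
    using iso gset_iso_zshift[OF m] by blast
  then have "gset_iso (F0 m) Y (zshift m k \<beta>) X (zshift m k \<alpha>)"
    by (rule gset_iso_sym) (rule zshift_closed[OF m closed])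
  then have "gset_iso (F0 m) Y (zshift m k \<beta>) Y \<beta>"
    using periodic iso by (blast intro: gset_iso_trans)
  with transitive_action_gset_iso[OF trans iso act] \<open>Y \<noteq> {}\<close> \<open>finite Y\<close> \<open>k > 0\<close> show ?thesis
    unfolding strongly_finite_transitive_def by blast
qed

lemma extends_iff_zshift_gset_iso:
  assumes m: "1 \<le> m" and act: "group_action (F0 m) S \<phi>"
  shows "(\<exists>\<psi>. group_action (FG m) S \<psi> \<and> (\<forall>g \<in> carrier (F0 m). \<psi> g = \<phi> g))
    \<longleftrightarrow> gset_iso (F0 m) S (zshift m 1 \<phi>) S \<phi>"
proof -
  have "zshift m 1 \<phi> = (\<lambda>g. \<phi> (inv\<^bsub>FG m\<^esub> z1 \<otimes>\<^bsub>FG m\<^esub> g \<otimes>\<^bsub>FG m\<^esub> z1))"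
    using group.int_pow_1[OF group_FG z1_in_carrier[OF m]] by (simp add: zshift_def)
  with group_action_extension_iff[OF group_hom_upsilon z1_in_carrier[OF m] upsilon_z1] act
  show ?thesis
    by (simp add: F0_eq_kernel)
qed

lemma multiplicity_in_zshift_if_gset_iso:
  assumes m: "1 \<le> m" and act: "group_action (F0 m) S \<phi>"
    and iso: "gset_iso (F0 m) S (zshift m 1 \<phi>) S \<phi>"
  shows "multiplicity_in m S \<phi> Orb \<tau> = multiplicity_in m S \<phi> Orb (zshift m 1 \<tau>)"
proof -
  have "orbit_multiplicity (F0 m) S \<phi> Orb \<tau> = orbit_multiplicity (F0 m) S (zshift m 1 \<phi>) Orb (zshift m 1 \<tau>)"
    by (rule orbit_multiplicity_zshift[OF m, symmetric])
  also have "\<dots> = orbit_multiplicity (F0 m) S \<phi> Orb (zshift m 1 \<tau>)"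
    by (rule orbit_multiplicity_gset_iso[OF group_action_zshift[OF m act] iso])
  finally show ?thesis
    by (simp add: multiplicity_in_eq_orbit_multiplicity)
qed

lemma zshift_gset_iso_if_multiplicity_in:
  assumes m: "1 \<le> m" and act: "group_action (F0 m) S \<phi>" and "finite S"
    and sft: "\<forall>X \<in> orbits (F0 m) S \<phi>. strongly_finite_transitive m X (restr_act \<phi> X)"
    and mult: "\<forall>(Orb :: nat set) \<tau>. strongly_finite_transitive m Orb \<tau> \<longrightarrow>
      multiplicity_in m S \<phi> Orb \<tau> = multiplicity_in m S \<phi> Orb (zshift m 1 \<tau>)"
  shows "gset_iso (F0 m) S (zshift m 1 \<phi>) S \<phi>"
proof (rule gset_iso_if_orbit_multiplicities_eq)
  show "group_action (F0 m) S (zshift m 1 \<phi>)"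
    using group_action_zshift[OF m act] .
  show "card (orbits (F0 m) S (zshift m 1 \<phi>)) = card (orbits (F0 m) S \<phi>)"
    by (simp add: orbits_zshift[OF m])
  fix X assume "X \<in> orbits (F0 m) S (zshift m 1 \<phi>)"
  then have X: "X \<in> orbits (F0 m) S \<phi>"
    by (simp add: orbits_zshift[OF m])
  note closed = group_action.orbit_closed[OF act X]
  have "transitive_action (F0 m) X (restr_act \<phi> X)" "finite X"
    using sft X unfolding strongly_finite_transitive_def by blast+
  then obtain N :: "nat set" and \<tau> where "group_action (F0 m) N \<tau>" and iso_r: "gset_iso (F0 m) X (restr_act \<phi> X) N \<tau>"
    by (meson exists_nat_gset_iso transitive_action_def)
  then have N: "strongly_finite_transitive m N \<tau>"
    using strongly_finite_transitive_gset_iso[OF m] sft X by blast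
  have iso: "gset_iso (F0 m) X \<phi> N \<tau>"
    using iso_r by (simp add: gset_iso_restr_act)
  have "orbit_multiplicity (F0 m) S (zshift m 1 \<phi>) X (zshift m 1 \<phi>) = orbit_multiplicity (F0 m) S \<phi> X \<phi>"
    by (rule orbit_multiplicity_zshift[OF m])
  also have "\<dots> = orbit_multiplicity (F0 m) S \<phi> N \<tau>"
    by (rule orbit_multiplicity_gset_iso_orbit[OF iso closed])
  also have "\<dots> = orbit_multiplicity (F0 m) S \<phi> N (zshift m 1 \<tau>)"
    using mult N by (simp add: multiplicity_in_eq_orbit_multiplicity)
  also have "\<dots> = orbit_multiplicity (F0 m) S \<phi> X (zshift m 1 \<phi>)"
    using gset_iso_zshift[OF m, THEN iffD2, OF iso] zshift_closed[OF m closed]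
    by (rule orbit_multiplicity_gset_iso_orbit[symmetric])
  finally show "orbit_multiplicity (F0 m) S (zshift m 1 \<phi>) X (zshift m 1 \<phi>)
      = orbit_multiplicity (F0 m) S \<phi> X (zshift m 1 \<phi>)" .
qed (use act \<open>finite S\<close> in simp_all)

theorem lemma5p6:
  fixes m :: nat and S :: "'a set" and \<phi> :: "fword \<Rightarrow> 'a \<Rightarrow> 'a"
  assumes "m \<ge> 1"
    and "group_action (F0 m) S \<phi>"
    and "finite S"
    and "\<forall>X \<in> orbits (F0 m) S \<phi>. strongly_finite_transitive m X (restr_act \<phi> X)"
  shows "(\<exists>\<psi>. group_action (FG m) S \<psi> \<and> (\<forall>g \<in> carrier (F0 m). \<psi> g = \<phi> g))
     \<longleftrightarrow> (\<forall>(Orb :: nat set) \<tau>. strongly_finite_transitive m Orb \<tau> \<longrightarrow>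
            multiplicity_in m S \<phi> Orb \<tau> = multiplicity_in m S \<phi> Orb (zshift m 1 \<tau>))"
proof -
  have "(\<exists>\<psi>. group_action (FG m) S \<psi> \<and> (\<forall>g \<in> carrier (F0 m). \<psi> g = \<phi> g))
      \<longleftrightarrow> gset_iso (F0 m) S (zshift m 1 \<phi>) S \<phi>"
    by (rule extends_iff_zshift_gset_iso[OF assms(1,2)])
  also have "\<dots> \<longleftrightarrow> (\<forall>(Orb :: nat set) \<tau>. strongly_finite_transitive m Orb \<tau> \<longrightarrow>
      multiplicity_in m S \<phi> Orb \<tau> = multiplicity_in m S \<phi> Orb (zshift m 1 \<tau>))"
    using multiplicity_in_zshift_if_gset_iso[OF assms(1,2)] zshift_gset_iso_if_multiplicity_in[OF assms]
    by blast
  finally show ?thesis .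
qed

end
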